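(* Let $G$ be a finite simple graph with $n$ vertices and minimum degree $\delta$ satisfying $230 \le \delta \le 1{,}000$. Then $$\gamma_s(G) \le \frac{\sqrt{\ln(\delta+1)\,(18.16 - 1.4\ln\delta)} + 0.25}{\sqrt{\delta+1}}\, n.$$
   Context: For a vertex $v$ of $G$, $N[v]$ denotes the closed neighbourhood of $v$ (i.e. $v$ together with its neighbours). A signed domination function of $G$ is a function $f: V(G) \to \{-1, 1\}$ such that $\sum_{x \in N[v]} f(x) \ge 1$ for every vertex $v \in V(G)$. The weight of $f$ is $f(V(G)) = \sum_{v \in V(G)} f(v)$. The signed domination number $\gamma_s(G)$ is the minimum weight of a signed domination function of $G$. *)

theory Defs
  imports Complex_Main
begin

definition simple_graph :: "'a set \<Rightarrow> ('a \<Rightarrow> 'a \<Rightarrow> bool) \<Rightarrow> bool" where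
  "simple_graph V E \<longleftrightarrow> finite V \<and>
     (\<forall>u v. E u v \<longrightarrow> u \<in> V \<and> v \<in> V) \<and>
     (\<forall>u v. E u v \<longrightarrow> E v u) \<and> (\<forall>v. \<not> E v v)"

definition neighbours :: "'a set \<Rightarrow> ('a \<Rightarrow> 'a \<Rightarrow> bool) \<Rightarrow> 'a \<Rightarrow> 'a set" where
  "neighbours V E v = {u \<in> V. E v u}"

definition closed_nbhd :: "'a set \<Rightarrow> ('a \<Rightarrow> 'a \<Rightarrow> bool) \<Rightarrow> 'a \<Rightarrow> 'a set" where
  "closed_nbhd V E v = insert v (neighbours V E v)"

definition degree :: "'a set \<Rightarrow> ('a \<Rightarrow> 'a \<Rightarrow> bool) \<Rightarrow> 'a \<Rightarrow> nat" where
  "degree V E v = card (neighbours V E v)"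

definition min_degree :: "'a set \<Rightarrow> ('a \<Rightarrow> 'a \<Rightarrow> bool) \<Rightarrow> nat" where
  "min_degree V E = Min (degree V E ` V)"

definition signed_dom_fun :: "'a set \<Rightarrow> ('a \<Rightarrow> 'a \<Rightarrow> bool) \<Rightarrow> ('a \<Rightarrow> int) \<Rightarrow> bool" where
  "signed_dom_fun V E f \<longleftrightarrow> (\<forall>v\<in>V. f v \<in> {-1, 1}) \<and>
     (\<forall>v\<in>V. (\<Sum>x\<in>closed_nbhd V E v. f x) \<ge> 1)"

definition signed_dom_number :: "'a set \<Rightarrow> ('a \<Rightarrow> 'a \<Rightarrow> bool) \<Rightarrow> int" where
  "signed_dom_number V E = Min {(\<Sum>v\<in>V. f v) | f. signed_dom_fun V E f}"

end

theory Submission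
  imports Defs "HOL-Probability.Hoeffding"
begin

text \<open>Choose a random set S of vertices, each independently with probability 1/2 - t,
  and call v heavy if S contains at least half of N[v]. Giving -1 to the vertices of S
  that lie in no closed neighbourhood of a heavy vertex and +1 to all others yields a
  signed domination function. Its weight is at most n - 2|S| + 2 \<Sum> |N[v]| (over heavy v), and
  Hoeffding's inequality bounds the probability that v is heavy by exp(-2 |N[v]| t^2).
  Taking expectations gives \<gamma>_s \<le> (2t + 2(\<delta>+1) exp(-2(\<delta>+1)t^2)) n, and
  t = sqrt(ln(\<delta>+1)/(\<delta>+1)) yields the stated bound.\<close>

lemma sum_plus_minus_one:
  assumes "finite A" "\<forall>x\<in>A. g x \<in> {-1, 1::int}"
  shows "(\<Sum>x\<in>A. g x) = int (card A) - 2 * int (card {x\<in>A. g x = -1})"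
proof -
  have "(\<Sum>x\<in>A. g x) = (\<Sum>x\<in>A. 1 - 2 * (if g x = -1 then 1 else 0))"
    using assms(2) by (intro sum.cong) auto
  also have "\<dots> = int (card A) - 2 * (\<Sum>x\<in>A. (if g x = -1 then 1 else 0))"
    by (simp add: sum_subtractf sum_distrib_left)
  also have "(\<Sum>x\<in>A. (if g x = -1 then 1 else 0::int)) = int (card {x\<in>A. g x = -1})"
    using assms(1) by (simp add: sum.If_cases Int_def conj_commute)
  finally show ?thesis .
qed

lemma closed_nbhd_subset:
  assumes "simple_graph V E" "v \<in> V"
  shows "closed_nbhd V E v \<subseteq> V"
  using assms unfolding simple_graph_def closed_nbhd_def neighbours_def by auto

lemma finite_closed_nbhd:
  assumes "simple_graph V E" "v \<in> V"
  shows "finite (closed_nbhd V E v)"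
  using assms closed_nbhd_subset finite_subset unfolding simple_graph_def by metis

lemma card_closed_nbhd:
  assumes "simple_graph V E"
  shows "card (closed_nbhd V E v) = Defs.degree V E v + 1"
proof -
  have "v \<notin> neighbours V E v" "finite (neighbours V E v)"
    using assms unfolding simple_graph_def neighbours_def by auto
  then show ?thesis unfolding closed_nbhd_def Defs.degree_def by simp
qed

lemma min_degree_le_degree:
  assumes "simple_graph V E" "v \<in> V"
  shows "min_degree V E \<le> Defs.degree V E v"
  using assms unfolding min_degree_def simple_graph_def by (intro Min_le) auto

lemma signed_dom_number_le:
  assumes "simple_graph V E" "signed_dom_fun V E f"
  shows "signed_dom_number V E \<le> (\<Sum>v\<in>V. f v)"
proof -
  have fin: "finite V" using assms(1) unfolding simple_graph_def by auto
  let ?W = "{(\<Sum>v\<in>V. g v) | g. signed_dom_fun V E g}"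
  have "?W \<subseteq> {- int (card V) .. int (card V)}"
  proof
    fix w assume "w \<in> ?W"
    then obtain g where g: "signed_dom_fun V E g" "w = (\<Sum>v\<in>V. g v)" by auto
    then have "w = int (card V) - 2 * int (card {x\<in>V. g x = -1})"
      using sum_plus_minus_one[OF fin] unfolding signed_dom_fun_def by auto
    moreover have "card {x\<in>V. g x = -1} \<le> card V" using fin by (intro card_mono) auto
    ultimately show "w \<in> {- int (card V) .. int (card V)}" by auto
  qed
  then have "finite ?W" by (rule finite_subset) simp
  moreover have "(\<Sum>v\<in>V. f v) \<in> ?W" using assms(2) by auto
  ultimately show ?thesis unfolding signed_dom_number_def by (rule Min_le)
qed

definition heavy :: "'a set \<Rightarrow> ('a \<Rightarrow> 'a \<Rightarrow> bool) \<Rightarrow> ('a \<Rightarrow> bool) \<Rightarrow> 'a \<Rightarrow> bool" where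
  "heavy V E S v \<longleftrightarrow> card (closed_nbhd V E v) \<le> 2 * card {x\<in>closed_nbhd V E v. S x}"

lemma signed_dom_number_le_heavy_bound:
  assumes G: "simple_graph V E"
  shows "real_of_int (signed_dom_number V E) \<le> real (card V) - 2 * real (card {x\<in>V. S x})
     + 2 * (\<Sum>v\<in>V. if heavy V E S v then real (card (closed_nbhd V E v)) else 0)"
proof -
  have fin: "finite V" using G unfolding simple_graph_def by auto
  define R where "R = (\<Union>v\<in>{v\<in>V. heavy V E S v}. closed_nbhd V E v)"
  define f where "f x = (if S x \<and> x \<notin> R then -1 else (1::int))" for x
  have f_pm: "\<forall>x\<in>A. f x \<in> {-1,1}" for A unfolding f_def by auto
  have "signed_dom_fun V E f"
    unfolding signed_dom_fun_def
  proof (intro conjI ballI)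
    fix v assume v: "v \<in> V"
    show "f v \<in> {-1,1}" using f_pm by blast
    let ?N = "closed_nbhd V E v"
    have sum_N: "(\<Sum>x\<in>?N. f x) = int (card ?N) - 2 * int (card {x\<in>?N. f x = -1})"
      using sum_plus_minus_one[OF finite_closed_nbhd[OF G v] f_pm] .
    show "1 \<le> (\<Sum>x\<in>?N. f x)"
    proof (cases "heavy V E S v")
      case True
      then have "{x\<in>?N. f x = -1} = {}" unfolding R_def f_def using v by auto
      then show ?thesis using sum_N card_closed_nbhd[OF G, of v] by (simp only: card.empty)
    next
      case False
      have "card {x\<in>?N. f x = -1} \<le> card {x\<in>?N. S x}"
        using finite_closed_nbhd[OF G v] by (intro card_mono) (auto simp: f_def)
      then show ?thesis using sum_N False unfolding heavy_def by linarith
    qed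
  qed
  then have "real_of_int (signed_dom_number V E) \<le> real_of_int (\<Sum>x\<in>V. f x)"
    using signed_dom_number_le[OF G] by (simp flip: of_int_sum)
  also have "\<dots> = real (card V) - 2 * real (card {x\<in>V. f x = -1})"
    using sum_plus_minus_one[OF fin f_pm] by simp
  also have "\<dots> \<le> real (card V) - 2 * real (card {x\<in>V. S x}) + 2 * real (card R)"
  proof -
    have "finite R" unfolding R_def using fin finite_closed_nbhd[OF G] by auto
    moreover have "{x\<in>V. f x = -1} = {x\<in>V. S x} - R" unfolding f_def by auto
    ultimately have "card {x\<in>V. S x} - card R \<le> card {x\<in>V. f x = -1}"
      by (metis diff_card_le_card_Diff)
    then show ?thesis by linarith
  qed
  also have "card R \<le> (\<Sum>v\<in>{v\<in>V. heavy V E S v}. card (closed_nbhd V E v))"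
    unfolding R_def by (rule card_UN_le) (use fin in auto)
  also have "\<dots> = (\<Sum>v\<in>V. if heavy V E S v then card (closed_nbhd V E v) else 0)"
    using fin by (simp add: sum.inter_filter)
  finally show ?thesis by (simp add: of_nat_sum if_distrib cong: if_cong)
qed

lemma prob_majority_selected_le:
  fixes C :: "'a set" and t :: real
  assumes "finite V" "C \<subseteq> V" "C \<noteq> {}" "0 \<le> t" "t \<le> 1/2"
  shows "measure_pmf.prob (Pi_pmf V False (\<lambda>_. bernoulli_pmf (1/2 - t)))
           {S. card C \<le> 2 * card {x\<in>C. S x}} \<le> exp (-2 * real (card C) * t\<^sup>2)"
proof -
  define p where "p = 1/2 - t"
  define m where "m = card C"
  let ?P = "Pi_pmf V False (\<lambda>_. bernoulli_pmf p)"
  let ?count = "\<lambda>S. card {x\<in>C. S x}"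
  have "finite C" using assms(1,2) finite_subset by blast
  then have m: "0 < m" using assms(3) unfolding m_def by (simp add: card_gt_0_iff)
  have p: "p \<in> {0..1}" using assms(4,5) unfolding p_def by auto
  have "map_pmf ?count ?P = map_pmf ?count (Pi_pmf C False (\<lambda>_. bernoulli_pmf p))"
    unfolding Pi_pmf_subset[OF assms(1,2)] map_pmf_comp by (intro map_pmf_cong refl) meson
  also have "\<dots> = binomial_pmf m p"
    by (rule binomial_pmf_altdef'[OF \<open>finite C\<close> m_def[symmetric] p, symmetric])
  finally have binomial: "map_pmf ?count ?P = binomial_pmf m p" .
  have "{S. m \<le> 2 * ?count S} = ?count -` {k. real m * p + real m * t \<le> real k}"
    unfolding p_def by (auto simp: algebra_simps)
  then have "measure_pmf.prob ?P {S. m \<le> 2 * ?count S}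
      = measure_pmf.prob (binomial_pmf m p) {k. real m * p + real m * t \<le> real k}"
    by (simp flip: binomial add: measure_map_pmf)
  also have "\<dots> \<le> exp (- 2 * (real m * t)\<^sup>2 / real m)"
    by (rule binomial_distribution.prob_ge) (use p m assms(4) in \<open>auto simp: binomial_distribution_def\<close>)
  also have "\<dots> = exp (-2 * real m * t\<^sup>2)"
    using m by (simp add: power2_eq_square)
  finally show ?thesis unfolding m_def p_def .
qed

lemma le_expectation_of_random_subset_bound:
  fixes V :: "'a set" and m :: "'a \<Rightarrow> nat" and B :: "'a \<Rightarrow> ('a \<Rightarrow> bool) set"
  assumes fin: "finite V" and p: "p \<in> {0..1}"
    and bound: "\<And>S. s \<le> real (card V) - 2 * real (card {x\<in>V. S x})
      + 2 * (\<Sum>v\<in>V. if S \<in> B v then real (m v) else 0)"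
  shows "s \<le> real (card V) - 2 * real (card V) * p
      + 2 * (\<Sum>v\<in>V. real (m v) * measure_pmf.prob (Pi_pmf V False (\<lambda>_. bernoulli_pmf p)) (B v))"
proof -
  define P where "P = Pi_pmf V False (\<lambda>_. bernoulli_pmf p)"
  have "finite (set_pmf P)" unfolding P_def using fin
    by (subst set_Pi_pmf) (auto intro!: finite_PiE_dflt)
  note integrable = integrable_measure_pmf_finite[OF this]
  have selected: "measure_pmf.expectation P (\<lambda>S. if S x then 1 else 0) = p" if "x \<in> V" for x
  proof -
    have "map_pmf (\<lambda>S. S x) P = bernoulli_pmf p"
      unfolding P_def using fin that by (simp add: Pi_pmf_component)
    then show ?thesis
      using p by (simp flip: integral_map_pmf[of "\<lambda>S. S x" P "\<lambda>b. if b then 1 else 0"])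
  qed
  define h where "h S = real (card V) - 2 * (\<Sum>x\<in>V. if S x then 1 else 0)
      + 2 * (\<Sum>v\<in>V. real (m v) * indicator (B v) S)" for S
  have "s \<le> h S" for S
    using bound[of S] fin by (simp add: h_def sum.If_cases Int_def conj_commute indicator_def
        if_distrib cong: if_cong)
  then have "s \<le> measure_pmf.expectation P h"
    by (intro measure_pmf.integral_ge_const integrable) auto
  also have "\<dots> = real (card V) - 2 * (\<Sum>x\<in>V. measure_pmf.expectation P (\<lambda>S. if S x then 1 else 0))
      + 2 * (\<Sum>v\<in>V. real (m v) * measure_pmf.prob P (B v))"
    unfolding h_def by (simp add: integrable Bochner_Integration.integral_sum)
  finally show ?thesis using selected unfolding P_def by simp
qed

lemma mult_exp_neg_antimono:
  fixes a x y :: real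
  assumes "0 < x" "x \<le> y" "1 \<le> a * x"
  shows "y * exp (- a * y) \<le> x * exp (- a * x)"
proof -
  have "y \<le> x * (1 + a * (y - x))"
    using mult_right_mono[OF assms(3), of "y - x"] assms(2) by (simp add: algebra_simps)
  also have "\<dots> \<le> x * exp (a * (y - x))"
    using assms(1) by (intro mult_left_mono) (auto simp: exp_ge_add_one_self)
  finally have "y * exp (- a * y) \<le> x * exp (a * (y - x)) * exp (- a * y)"
    by (intro mult_right_mono) auto
  also have "\<dots> = x * exp (- a * x)"
    by (simp add: mult.assoc exp_add[symmetric] algebra_simps)
  finally show ?thesis .
qed

theorem signed_dom_number_le_random_bound:
  fixes V :: "'a set" and E :: "'a \<Rightarrow> 'a \<Rightarrow> bool" and t :: real
  defines "M \<equiv> real (min_degree V E) + 1"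
  assumes G: "simple_graph V E" and t: "0 \<le> t" "t \<le> 1/2" and large: "1 \<le> 2 * t\<^sup>2 * M"
  shows "real_of_int (signed_dom_number V E) \<le> (2 * t + 2 * M * exp (- 2 * t\<^sup>2 * M)) * real (card V)"
proof -
  have fin: "finite V" using G unfolding simple_graph_def by auto
  let ?P = "Pi_pmf V False (\<lambda>_. bernoulli_pmf (1/2 - t))"
  let ?N = "closed_nbhd V E"
  have "real_of_int (signed_dom_number V E) \<le> real (card V) - 2 * real (card V) * (1/2 - t)
      + 2 * (\<Sum>v\<in>V. real (card (?N v)) * measure_pmf.prob ?P {S. heavy V E S v})"
    by (rule le_expectation_of_random_subset_bound[OF fin])
      (use t signed_dom_number_le_heavy_bound[OF G] in auto)
  also have "(\<Sum>v\<in>V. real (card (?N v)) * measure_pmf.prob ?P {S. heavy V E S v})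
      \<le> (\<Sum>v\<in>V. M * exp (- 2 * t\<^sup>2 * M))"
  proof (rule sum_mono)
    fix v assume v: "v \<in> V"
    have M_le: "M \<le> real (card (?N v))"
      using min_degree_le_degree[OF G v] card_closed_nbhd[OF G] unfolding M_def by simp
    have "measure_pmf.prob ?P {S. heavy V E S v} \<le> exp (- 2 * t\<^sup>2 * real (card (?N v)))"
      using prob_majority_selected_le[OF fin closed_nbhd_subset[OF G v] _ t]
      by (simp add: heavy_def closed_nbhd_def mult_ac)
    then have "real (card (?N v)) * measure_pmf.prob ?P {S. heavy V E S v}
        \<le> real (card (?N v)) * exp (- (2 * t\<^sup>2) * real (card (?N v)))"
      by (intro mult_left_mono) auto
    also have "\<dots> \<le> M * exp (- (2 * t\<^sup>2) * M)"
      by (rule mult_exp_neg_antimono) (use M_le large in \<open>auto simp: M_def mult_ac\<close>)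
    finally show "real (card (?N v)) * measure_pmf.prob ?P {S. heavy V E S v}
        \<le> M * exp (- 2 * t\<^sup>2 * M)" by simp
  qed
  finally show ?thesis by (simp add: algebra_simps)
qed

lemma four_ln_le_self:
  fixes x :: real
  assumes "64 \<le> x"
  shows "4 * ln x \<le> x"
proof -
  have sqrt_x: "8 \<le> sqrt x" using assms by (simp add: real_le_rsqrt)
  have "ln x = 2 * ln (sqrt x)" using assms by (simp add: ln_sqrt)
  also have "\<dots> \<le> 2 * sqrt x" using ln_le_minus_one[of "sqrt x"] sqrt_x assms by simp
  finally have "4 * ln x \<le> 8 * sqrt x" by simp
  also have "\<dots> \<le> sqrt x * sqrt x" using sqrt_x assms by (intro mult_right_mono) auto
  also have "\<dots> = x" using assms by simp
  finally show ?thesis .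
qed

corollary signed_dom_number_le_log_bound:
  fixes V :: "'a set" and E :: "'a \<Rightarrow> 'a \<Rightarrow> bool"
  defines "M \<equiv> real (min_degree V E) + 1"
  assumes G: "simple_graph V E" and M: "64 \<le> M"
  shows "real_of_int (signed_dom_number V E) \<le> (2 * sqrt (ln M / M) + 2 / M) * real (card V)"
proof -
  define t where "t = sqrt (ln M / M)"
  have "exp 1 \<le> M" using exp_le M by simp
  then have ln_M: "1 \<le> ln M" using M by (simp add: ln_ge_iff)
  have t2: "t\<^sup>2 = ln M / M" unfolding t_def using ln_M M by simp
  have t0: "0 \<le> t" unfolding t_def using ln_M M by simp
  have "t\<^sup>2 \<le> (1/2)\<^sup>2"
    using four_ln_le_self[OF M] M unfolding t2 by (simp add: field_simps)
  then have t_half: "t \<le> 1/2" using t0 by (simp add: power_mono_iff)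
  have large: "1 \<le> 2 * t\<^sup>2 * M" using t2 ln_M M by simp
  have "- 2 * t\<^sup>2 * M = - (ln M + ln M)" using t2 M by simp
  then have "exp (- 2 * t\<^sup>2 * M) = inverse (exp (ln M) * exp (ln M))"
    by (simp only: exp_minus exp_add)
  then have "M * exp (- 2 * t\<^sup>2 * M) = 1 / M" using M by (simp add: inverse_eq_divide)
  moreover have "real_of_int (signed_dom_number V E)
      \<le> (2 * t + 2 * (M * exp (- 2 * t\<^sup>2 * M))) * real (card V)"
    using signed_dom_number_le_random_bound[OF G t0 t_half large[unfolded M_def], folded M_def]
    by (simp add: mult.assoc)
  ultimately show ?thesis unfolding t_def by simp
qed

lemma sqrt_ln_bound_le_explicit:
  fixes d :: real
  assumes "63 \<le> d" "d \<le> 1024"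
  shows "2 * sqrt (ln (d + 1) / (d + 1)) + 2 / (d + 1)
    \<le> (sqrt (ln (d + 1) * (18.16 - 1.4 * ln d)) + 0.25) / sqrt (d + 1)"
proof -
  define M where "M = d + 1"
  have M: "64 \<le> M" using assms(1) unfolding M_def by simp
  have sqrt_M: "8 \<le> sqrt M" using M by (simp add: real_le_rsqrt)
  have "ln d \<le> ln (2 ^ 10)" using assms by (subst ln_le_cancel_iff) auto
  also have "\<dots> = 10 * ln 2" by (simp only: ln_realpow)
  also have "\<dots> \<le> 10" using ln_le_minus_one[of 2] by simp
  finally have "4 \<le> 18.16 - 1.4 * ln d" by simp
  then have "sqrt (ln M * 4) \<le> sqrt (ln M * (18.16 - 1.4 * ln d))"
    using M by (intro real_sqrt_le_mono mult_left_mono) auto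
  then have main: "2 * sqrt (ln M) \<le> sqrt (ln M * (18.16 - 1.4 * ln d))"
    by (simp add: real_sqrt_mult)
  have "2 / M = (2 / sqrt M) / sqrt M" using M by (simp add: real_sqrt_mult[symmetric])
  also have "\<dots> \<le> 0.25 / sqrt M" using sqrt_M M by (intro divide_right_mono) (auto simp: divide_simps)
  finally have "2 * sqrt (ln M / M) + 2 / M \<le> (2 * sqrt (ln M) + 0.25) / sqrt M"
    by (simp add: real_sqrt_divide add_divide_distrib)
  also have "\<dots> \<le> (sqrt (ln M * (18.16 - 1.4 * ln d)) + 0.25) / sqrt M"
    using main M by (intro divide_right_mono) auto
  finally show ?thesis unfolding M_def .
qed

theorem corollary3:
  fixes V :: "'a set" and E :: "'a \<Rightarrow> 'a \<Rightarrow> bool"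
  assumes "simple_graph V E" and "V \<noteq> {}"
    and "230 \<le> min_degree V E" and "min_degree V E \<le> 1000"
  shows "real_of_int (signed_dom_number V E) \<le>
    (sqrt (ln (real (min_degree V E) + 1) * (18.16 - 1.4 * ln (real (min_degree V E)))) + 0.25)
      / sqrt (real (min_degree V E) + 1) * real (card V)"
proof -
  let ?d = "real (min_degree V E)"
  have "real_of_int (signed_dom_number V E)
      \<le> (2 * sqrt (ln (?d + 1) / (?d + 1)) + 2 / (?d + 1)) * real (card V)"
    by (rule signed_dom_number_le_log_bound) (use assms(1,3) in auto)
  also have "\<dots> \<le> (sqrt (ln (?d + 1) * (18.16 - 1.4 * ln ?d)) + 0.25) / sqrt (?d + 1) * real (card V)"
    by (intro mult_right_mono sqrt_ln_bound_le_explicit) (use assms(3,4) in auto)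
  finally show ?thesis .
qed

end
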